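(* Let $n\geq1$. For every $j\in\{0,1,\dots,n-1\}$, with $\xi_n=e^{2i\pi/n}$, $$\overline{O}_n(\xi_n^j)=\#\{P\in\overline{\mathcal{O}}_n:\ \mathbf{r}^j(P)=P\};$$ that is, the triple $(\overline{\mathcal{O}}_n,\langle\mathbf{r}\rangle,\overline{O}_n(q))$ exhibits the cyclic sieving phenomenon.
   Context: $\overline{\mathcal{O}}_n$ is the set of lattice paths from $(0,i)$ to $(n,i)$, for some integer $i\geq0$, with steps $D=(1,-1)$, $U=(1,1)$ and two distinguishable kinds of horizontal steps $H_1=H_2=(1,0)$, which stay weakly above the $x$-axis and touch it at least once. Equivalently, such a path is determined by its step word $w_1\cdots w_n\in\{D,H_1,H_2,U\}^n$ having as many $U$'s as $D$'s, the starting height being forced by the condition that the minimum height is $0$. The area of a path is the area of the region between the path and the $x$-axis (an integer), and $\overline{O}_n(q)=\sum_{P\in\overline{\mathcal{O}}_n}q^{\mathrm{area}(P)}$. The rotation $\mathbf{r}$ acts on $\overline{\mathcal{O}}_n$ by cyclically shifting the step word one position to the right, $w_1\cdots w_n\mapsto w_nw_1\cdots w_{n-1}$ (re-choosing the starting height so the minimum height is $0$); it generates a cyclic group of order $n$. A triple $(X,C,P)$ with $C=\langle c\rangle$ cyclic of order $n$ acting on finite $X$ and $P\in\mathbb{N}[q]$ exhibits the cyclic sieving phenomenon if $P(\xi_n^j)$ equals the number of elements of $X$ fixed by $c^j$ for every $j$. *)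

theory Defs
  imports Complex_Main "HOL-Computational_Algebra.Polynomial"
begin

text \<open>Steps D = (1,-1), two kinds of horizontal steps H1, H2 = (1,0), and U = (1,1).\<close>
datatype step = D | H1 | H2 | U

fun dy :: "step \<Rightarrow> int" where
  "dy D = -1" | "dy H1 = 0" | "dy H2 = 0" | "dy U = 1"

text \<open>A path in the set Obar_n is identified with its step word: length n and as many U as D.
  The starting height is forced by requiring the minimum height to be 0.\<close>
definition Opaths :: "nat \<Rightarrow> step list set" where
  "Opaths n = {w. length w = n \<and> count_list w U = count_list w D}"

definition relh :: "step list \<Rightarrow> nat \<Rightarrow> int" where
  "relh w k = (\<Sum>i<k. dy (w ! i))"

definition height :: "step list \<Rightarrow> nat \<Rightarrow> int" where
  "height w k = relh w k - Min ((relh w) ` {0..length w})"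

text \<open>Area between the path and the x-axis: each step contributes the trapezoid area
  (h_{k-1} + h_k)/2; the total is an integer since the number of non-horizontal steps is even.\<close>
definition area :: "step list \<Rightarrow> nat" where
  "area w = nat ((\<Sum>k\<in>{1..length w}. height w (k - 1) + height w k) div 2)"

definition Opoly :: "nat \<Rightarrow> complex poly" where
  "Opoly n = (\<Sum>w\<in>Opaths n. monom 1 (area w))"

definition rot :: "step list \<Rightarrow> step list" where
  "rot w = (if w = [] then [] else last w # butlast w)"

end

theory Submission
  imports Defs "HOL-Library.Real_Mod"
begin

(*
  Cyclic sieving for the paths Obar_n under rotation: Obar_n(xi_n^j) = #{P. r^j P = P}.
  Put d = gcd n j and m = n / d, so that xi_n^j is a primitive m-th root of unity.

  1. area_eq_moment: for a balanced word w, area w = - moment w - n * (minimal relative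
     height), where moment w = sum_i i * dy(w_i).  Hence (Opoly_at_root) the left-hand side
     is the character sum over Obar_n of E (- moment w), with E x = xi_n^(j x), a character
     of the integers of period m with E (- c) <> 1 for 0 < c < m.
  2. Locales block_words / block_character: write each step as two bits (U = 11, H1 = 10,
     H2 = 01, D = 00), so dy = a + b - 1, and cut words of length d m into d blocks of
     length m, each carrying two bit rows.  A balanced word is bad if some row is mixed.
     Cyclically shifting the first mixed row permutes the bad words and multiplies
     E (- moment w) by E (- c), c the number of ones of that row; averaging over m shifts
     the bad words contribute 0 (bad_character_sum).  Good words are blowups of words in
     Obar_d with E (- moment w) = 1, so the character sum is #Obar_d (character_sum).
  3. card_fixed_points_rot: r^j is the rotation by j (n - 1), whose fixed words are the
     words of period gcd n (j (n - 1)) = d, again counted by #Obar_d.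
*)

lemma sum_list_dy: "sum_list (map dy w) = int (count_list w U) - int (count_list w D)"
proof (induction w)
  case (Cons s w)
  then show ?case by (cases s) auto
qed simp

lemma Opaths_iff: "w \<in> Opaths n \<longleftrightarrow> length w = n \<and> (\<Sum>i<n. dy (w!i)) = 0"
proof -
  have "(\<Sum>i<length w. dy (w!i)) = sum_list (map dy w)"
    by (simp add: sum_list_sum_nth atLeast0LessThan)
  then show ?thesis unfolding Opaths_def using sum_list_dy[of w] by auto
qed

lemma finite_Opaths: "finite (Opaths n)"
proof -
  have "finite (UNIV :: step set)"
  proof -
    have "(UNIV :: step set) = {D, H1, H2, U}" using step.exhaust by auto
    then show ?thesis by (metis finite.emptyI finite_insert)
  qed
  then have "finite {w :: step list. set w \<subseteq> UNIV \<and> length w = n}"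
    by (rule finite_lists_length_eq)
  then show ?thesis by (rule finite_subset[rotated]) (auto simp: Opaths_def)
qed

subsection \<open>The area modulo n\<close>

definition moment :: "step list \<Rightarrow> int" where
  "moment w = (\<Sum>i<length w. int i * dy (w!i))"

lemma sum_consecutive_pairs:
  fixes f :: "nat \<Rightarrow> int"
  shows "(\<Sum>k\<in>{1..N}. f (k - 1) + f k) = 2 * (\<Sum>k<N. f k) + f N - f 0"
  by (induction N) (auto simp: atLeastAtMostSuc_conv algebra_simps)

lemma sum_partial_sums:
  fixes f :: "nat \<Rightarrow> int"
  shows "(\<Sum>k<N. \<Sum>i<k. f i) = (\<Sum>i<N. (int N - 1 - int i) * f i)"
proof (induction N)
  case (Suc N)
  have "(\<Sum>k<Suc N. \<Sum>i<k. f i) = (\<Sum>i<N. (int N - 1 - int i) * f i) + (\<Sum>i<N. f i)"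
    using Suc by simp
  also have "\<dots> = (\<Sum>i<N. (int N - int i) * f i)"
    by (simp add: sum.distrib[symmetric] algebra_simps)
  finally show ?case by simp
qed simp

lemma area_eq_moment:
  assumes "w \<in> Opaths n"
  shows "int (area w) = - moment w - int n * Min (relh w ` {0..length w})"
proof -
  define M where "M = Min (relh w ` {0..length w})"
  have len: "length w = n" and bal: "(\<Sum>i<n. dy (w!i)) = 0"
    using assms by (simp_all add: Opaths_iff)
  have closed: "height w n = height w 0"
    using bal len by (simp add: height_def relh_def)
  have nonneg: "height w k \<ge> 0" if "k \<le> n" for k
    using that len by (auto simp: height_def intro!: Min_le)
  have "(\<Sum>k\<in>{1..n}. height w (k - 1) + height w k) = 2 * (\<Sum>k<n. height w k)"
    using sum_consecutive_pairs[of "height w" n] closed by simp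
  moreover have "(\<Sum>k<n. height w k) \<ge> 0" using nonneg by (auto intro: sum_nonneg)
  ultimately have "int (area w) = (\<Sum>k<n. height w k)"
    using len by (simp add: area_def)
  also have "\<dots> = (\<Sum>k<n. relh w k) - int n * M"
    by (simp add: height_def M_def sum_subtractf)
  also have "(\<Sum>k<n. relh w k) = (\<Sum>i<n. (int n - 1 - int i) * dy (w!i))"
    unfolding relh_def by (rule sum_partial_sums)
  also have "\<dots> = (int n - 1) * (\<Sum>i<n. dy (w!i)) - moment w"
    by (simp add: moment_def len algebra_simps sum_subtractf sum_distrib_left sum.distrib)
  finally show ?thesis using bal M_def by simp
qed

subsection \<open>Steps as pairs of bits\<close>

text \<open>A step is a pair of bits: U = (1,1), H1 = (1,0), H2 = (0,1), D = (0,0).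
  The bit rows can be manipulated independently, and dy is affine in the bits.\<close>
fun bit :: "bool \<Rightarrow> step \<Rightarrow> bool" where
  "bit False s = (s = U \<or> s = H1)"
| "bit True s = (s = U \<or> s = H2)"

fun step_of_bits :: "bool \<Rightarrow> bool \<Rightarrow> step" where
  "step_of_bits True True = U"
| "step_of_bits True False = H1"
| "step_of_bits False True = H2"
| "step_of_bits False False = D"

lemma bit_step_of_bits [simp]:
  "bit False (step_of_bits a b) = a" "bit True (step_of_bits a b) = b"
  by (cases a; cases b; simp)+

lemma step_eq_iff_bits: "s = t \<longleftrightarrow> (\<forall>e. bit e s = bit e t)"
proof
  assume "\<forall>e. bit e s = bit e t"
  then have "bit False s = bit False t" "bit True s = bit True t" by blast+
  then show "s = t" by (cases s; cases t) auto
qed simp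

lemma dy_bits: "dy s = of_bool (bit False s) + of_bool (bit True s) - 1"
  by (cases s) auto

definition set_bit :: "bool \<Rightarrow> bool \<Rightarrow> step \<Rightarrow> step" where
  "set_bit e b s = (if e then step_of_bits (bit False s) b else step_of_bits b (bit True s))"

lemma bit_set_bit: "bit e' (set_bit e b s) = (if e' = e then b else bit e' s)"
  by (cases e; cases e') (simp_all add: set_bit_def del: bit.simps)

lemma sum_blocks:
  fixes f :: "nat \<Rightarrow> 'a::comm_monoid_add"
  shows "(\<Sum>p<d*m. f p) = (\<Sum>q<d. \<Sum>r<m. f (q*m + r))"
proof -
  have "(\<Sum>p\<in>{q*m..<q*m+m}. f p) = (\<Sum>r<m. f (q*m + r))" for q
    using sum.shift_bounds_nat_ivl[of f 0 "q*m" m] by (simp add: atLeast0LessThan add.commute)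
  then show ?thesis using sum.nat_group[of f m d] by simp
qed

lemma mod_shift_back: "x < m' \<Longrightarrow> Suc (x + m') mod Suc m' = x"
  by (metis add.commute add_Suc_right less_SucI mod_add_self2 mod_less)

lemma sum_cyclic_shift:
  fixes f :: "nat \<Rightarrow> 'a::comm_monoid_add"
  assumes "0 < m"
  shows "(\<Sum>r<m. f ((r + m - 1) mod m)) = (\<Sum>r<m. f r)"
proof -
  obtain m' where m: "m = Suc m'" using assms by (cases m) auto
  have "(\<Sum>r<m. f ((r + m - 1) mod m)) = f m' + (\<Sum>i<m'. f (Suc (i + m') mod Suc m'))"
    unfolding m by (subst sum.lessThan_Suc_shift) simp
  also have "\<dots> = f m' + (\<Sum>i<m'. f i)" by (simp add: mod_shift_back)
  finally show ?thesis unfolding m by (simp add: add.commute)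
qed

lemma weighted_sum_cyclic_shift:
  fixes f :: "nat \<Rightarrow> 'a::comm_ring_1"
  assumes "0 < m"
  shows "(\<Sum>r<m. of_nat (c + r) * f ((r + m - 1) mod m))
    = (\<Sum>r<m. of_nat (c + r) * f r) + (\<Sum>r<m. f r) - of_nat m * f (m - 1)"
proof -
  obtain m' where m: "m = Suc m'" using assms by (cases m) auto
  have "(\<Sum>r<m. of_nat (c + r) * f ((r + m - 1) mod m))
      = of_nat c * f m' + (\<Sum>i<m'. of_nat (c + Suc i) * f (Suc (i + m') mod Suc m'))"
    unfolding m by (subst sum.lessThan_Suc_shift) simp
  also have "\<dots> = of_nat c * f m' + (\<Sum>i<m'. of_nat (c + i) * f i + f i)"
    by (simp add: mod_shift_back algebra_simps)
  finally show ?thesis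
    unfolding m by (simp add: sum.distrib algebra_simps sum.lessThan_Suc)
qed

text \<open>Words of length d m are cut into d blocks of length m; position q m + r is entry r of
  block q.  Each block carries two bit rows, numbered k < 2 d: row k is bit odd k of
  block k div 2.\<close>
locale block_words =
  fixes m d :: nat
  assumes m_pos: "0 < m"
begin

lemma block_pos_less: "q < d \<Longrightarrow> r < m \<Longrightarrow> q*m + r < d*m"
proof -
  assume "q < d" "r < m"
  then have "q*m + r < Suc q * m" by simp
  also have "\<dots> \<le> d*m" using \<open>q < d\<close> by (intro mult_right_mono) auto
  finally show ?thesis .
qed

lemma blocks_eqI:
  assumes "length w = d*m" "length w' = d*m"
    and "\<And>q r. q < d \<Longrightarrow> r < m \<Longrightarrow> w!(q*m + r) = w'!(q*m + r)"
  shows "w = w'"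
proof (rule nth_equalityI)
  fix p assume "p < length w"
  then have "p div m < d" using assms(1) by (simp add: less_mult_imp_div_less)
  moreover have "p = p div m * m + p mod m" by simp
  ultimately show "w!p = w'!p" using assms(3)[of "p div m" "p mod m"] m_pos
    by (metis mod_less_divisor)
qed (use assms in simp)

definition ones :: "step list \<Rightarrow> nat \<Rightarrow> bool \<Rightarrow> nat" where
  "ones w q e = (\<Sum>r<m. of_bool (bit e (w!(q*m + r))))"

definition row_ones :: "step list \<Rightarrow> nat \<Rightarrow> nat" where
  "row_ones w k = ones w (k div 2) (odd k)"

lemma ones_le: "ones w q e \<le> m"
proof -
  have "ones w q e \<le> (\<Sum>r<m. 1)" unfolding ones_def by (intro sum_mono) auto
  then show ?thesis by simp
qed

text \<open>Cyclically shift row k of w one position to the right inside its block.\<close>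
definition shift_row :: "nat \<Rightarrow> step list \<Rightarrow> step list" where
  "shift_row k w = map (\<lambda>p. if p div m = k div 2
      then set_bit (odd k) (bit (odd k) (w ! (p - p mod m + (p mod m + m - 1) mod m))) (w!p)
      else w!p) [0..<length w]"

lemma length_shift_row [simp]: "length (shift_row k w) = length w"
  by (simp add: shift_row_def)

lemma bit_shift_row:
  assumes "length w = d*m" "q < d" "r < m"
  shows "bit e (shift_row k w ! (q*m + r)) =
    (if q = k div 2 \<and> e = odd k then bit e (w!(q*m + (r + m - 1) mod m)) else bit e (w!(q*m + r)))"
  using assms block_pos_less[OF assms(2,3)] by (auto simp: shift_row_def bit_set_bit)

lemma ones_shift_row:
  assumes "length w = d*m" "q < d"
  shows "ones (shift_row k w) q e = ones w q e"
proof (cases "q = k div 2 \<and> e = odd k")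
  case True
  then have "ones (shift_row k w) q e = (\<Sum>r<m. of_bool (bit e (w!(q*m + (r + m - 1) mod m))))"
    unfolding ones_def using assms by (intro sum.cong) (auto simp: bit_shift_row)
  also have "\<dots> = ones w q e"
    unfolding ones_def by (rule sum_cyclic_shift[OF m_pos])
  finally show ?thesis .
next
  case False
  then show ?thesis unfolding ones_def using assms by (intro sum.cong) (auto simp: bit_shift_row)
qed

lemma row_ones_shift_row:
  "length w = d*m \<Longrightarrow> k' < 2*d \<Longrightarrow> row_ones (shift_row k w) k' = row_ones w k'"
  unfolding row_ones_def by (rule ones_shift_row) auto

text \<open>Shifting row k back undoes the shift, so shift_row k is injective on words of
  length d m.\<close>
lemma shift_row_inj:
  assumes "length w = d*m" "length w' = d*m" "shift_row k w = shift_row k w'"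
  shows "w = w'"
proof (rule blocks_eqI[OF assms(1,2)])
  fix q r assume qr: "q < d" "r < m"
  show "w!(q*m + r) = w'!(q*m + r)"
  proof (subst step_eq_iff_bits, intro allI)
    fix e
    show "bit e (w!(q*m + r)) = bit e (w'!(q*m + r))"
    proof (cases "q = k div 2 \<and> e = odd k")
      case True
      define r' where "r' = (r + 1) mod m"
      have r': "r' < m" "(r' + m - 1) mod m = r"
        using qr m_pos by (auto simp: r'_def) (cases "r + 1 = m"; simp)
      have "bit e (shift_row k w ! (q*m + r')) = bit e (shift_row k w' ! (q*m + r'))"
        using assms(3) by simp
      then show ?thesis using True assms(1,2) qr r' by (simp add: bit_shift_row del: bit.simps)
    next
      case False
      have "bit e (shift_row k w ! (q*m + r)) = bit e (shift_row k w' ! (q*m + r))"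
        using assms(3) by simp
      then show ?thesis using False assms(1,2) qr by (simp add: bit_shift_row del: bit.simps)
    qed
  qed
qed

definition row_moment :: "step list \<Rightarrow> nat \<Rightarrow> bool \<Rightarrow> int" where
  "row_moment w q e = (\<Sum>r<m. int (q*m + r) * of_bool (bit e (w!(q*m + r))))"

lemma moment_by_rows:
  assumes "length w = d*m"
  shows "moment w = (\<Sum>q<d. row_moment w q False + row_moment w q True - (\<Sum>r<m. int (q*m + r)))"
  unfolding moment_def assms sum_blocks row_moment_def
  by (simp add: dy_bits sum.distrib sum_subtractf algebra_simps)

lemma row_moment_shift_row:
  assumes "length w = d*m" "q < d"
  shows "row_moment (shift_row k w) q e = row_moment w q e + (if q = k div 2 \<and> e = odd k
     then int (ones w q e) - int m * of_bool (bit e (w!(q*m + (m - 1)))) else 0)"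
proof (cases "q = k div 2 \<and> e = odd k")
  case True
  define f where "f r = (of_bool (bit e (w!(q*m + r))) :: int)" for r
  have "row_moment (shift_row k w) q e = (\<Sum>r<m. of_nat (q*m + r) * f ((r + m - 1) mod m))"
    unfolding row_moment_def f_def using True assms by (intro sum.cong) (auto simp: bit_shift_row)
  also have "\<dots> = row_moment w q e + int (ones w q e) - int m * f (m - 1)"
    unfolding weighted_sum_cyclic_shift[OF m_pos] by (simp add: row_moment_def ones_def f_def)
  finally show ?thesis using True by (simp add: f_def)
next
  case False
  then show ?thesis unfolding row_moment_def using assms by (auto intro: sum.cong simp: bit_shift_row)
qed

lemma moment_shift_row:
  assumes "length w = d*m" "k < 2*d"
  obtains t where "moment (shift_row k w) = moment w + int (row_ones w k) - int m * t"
proof -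
  define q0 where "q0 = k div 2"
  have q0: "q0 < d" using assms(2) by (simp add: q0_def less_mult_imp_div_less mult.commute)
  define X where "X q = (if q = q0
    then int (row_ones w k) - int m * of_bool (bit (odd k) (w!(q*m + (m - 1)))) else 0)" for q
  have len_shift: "length (shift_row k w) = d*m" using assms(1) by simp
  have "moment (shift_row k w)
      = (\<Sum>q<d. (row_moment w q False + row_moment w q True - (\<Sum>r<m. int (q*m + r))) + X q)"
    unfolding moment_by_rows[OF len_shift] using assms(1)
    by (intro sum.cong refl) (auto simp: row_moment_shift_row X_def q0_def row_ones_def)
  also have "\<dots> = moment w + X q0"
    using q0 by (simp add: sum.distrib moment_by_rows[OF assms(1)] X_def)
  finally show ?thesis using that unfolding X_def by auto
qed

subsection \<open>Bad words and the shift map\<close>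

definition mixed_row :: "step list \<Rightarrow> nat \<Rightarrow> bool" where
  "mixed_row w k = (k < 2*d \<and> 0 < row_ones w k \<and> row_ones w k < m)"

definition bad :: "step list \<Rightarrow> bool" where
  "bad w = (w \<in> Opaths (d*m) \<and> (\<exists>k. mixed_row w k))"

definition first_mixed :: "step list \<Rightarrow> nat" where
  "first_mixed w = (LEAST k. mixed_row w k)"

definition shift_bad :: "step list \<Rightarrow> step list" where
  "shift_bad w = shift_row (first_mixed w) w"

lemma mixed_first_mixed: "bad w \<Longrightarrow> mixed_row w (first_mixed w)"
  unfolding bad_def first_mixed_def by (auto intro: LeastI_ex)

lemma mixed_row_shift_row: "length w = d*m \<Longrightarrow> mixed_row (shift_row k w) = mixed_row w"
  by (auto simp: mixed_row_def row_ones_shift_row fun_eq_iff)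

lemma first_mixed_shift_row: "length w = d*m \<Longrightarrow> first_mixed (shift_row k w) = first_mixed w"
  by (simp add: first_mixed_def mixed_row_shift_row)

lemma sum_dy_by_ones:
  assumes "length w = d*m"
  shows "(\<Sum>p<d*m. dy (w!p)) = (\<Sum>q<d. int (ones w q False) + int (ones w q True) - int m)"
  unfolding sum_blocks ones_def by (simp add: dy_bits sum.distrib sum_subtractf del: bit.simps)

lemma shift_row_Opaths:
  assumes "w \<in> Opaths (d*m)"
  shows "shift_row k w \<in> Opaths (d*m)"
proof -
  have len: "length w = d*m" using assms by (simp add: Opaths_iff)
  then have "(\<Sum>p<d*m. dy (shift_row k w ! p)) = (\<Sum>p<d*m. dy (w!p))"
    by (simp add: sum_dy_by_ones ones_shift_row)
  then show ?thesis using assms by (simp add: Opaths_iff)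
qed

lemma shift_bad_invariants:
  assumes "bad w"
  shows "bad (shift_bad w) \<and> first_mixed (shift_bad w) = first_mixed w
    \<and> row_ones (shift_bad w) (first_mixed w) = row_ones w (first_mixed w)"
proof -
  have len: "length w = d*m" using assms by (simp add: bad_def Opaths_iff)
  have "first_mixed w < 2*d" using mixed_first_mixed[OF assms] by (simp add: mixed_row_def)
  then show ?thesis using assms len
    by (auto simp: bad_def shift_bad_def shift_row_Opaths mixed_row_shift_row
        first_mixed_shift_row row_ones_shift_row)
qed

lemma funpow_shift_bad_invariants:
  assumes "bad w"
  shows "bad ((shift_bad^^k) w) \<and> first_mixed ((shift_bad^^k) w) = first_mixed w
    \<and> row_ones ((shift_bad^^k) w) (first_mixed w) = row_ones w (first_mixed w)"
proof (induction k)
  case (Suc k)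
  then show ?case using shift_bad_invariants[of "(shift_bad^^k) w"] by simp
qed (simp add: assms)

lemma moment_funpow_shift_bad:
  assumes "bad w"
  obtains t where "moment ((shift_bad^^k) w)
    = moment w + int k * int (row_ones w (first_mixed w)) - int m * t"
proof (induction k arbitrary: thesis)
  case 0
  then show ?case by (simp add: "0.prems"[of 0])
next
  case (Suc k)
  define v where "v = (shift_bad^^k) w"
  obtain t where t: "moment v = moment w + int k * int (row_ones w (first_mixed w)) - int m * t"
    using Suc.IH v_def by blast
  have inv: "bad v" "first_mixed v = first_mixed w"
      "row_ones v (first_mixed w) = row_ones w (first_mixed w)"
    using funpow_shift_bad_invariants[OF assms, of k] by (simp_all add: v_def)
  have "length v = d*m" "first_mixed v < 2*d"
    using inv(1) mixed_first_mixed[OF inv(1)] by (simp_all add: bad_def Opaths_iff mixed_row_def)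
  then obtain t'
    where "moment (shift_bad v) = moment v + int (row_ones v (first_mixed v)) - int m * t'"
    unfolding shift_bad_def by (rule moment_shift_row)
  then have "moment ((shift_bad^^Suc k) w)
      = moment w + int (Suc k) * int (row_ones w (first_mixed w)) - int m * (t + t')"
    using t inv by (simp add: v_def algebra_simps)
  then show ?case by (rule Suc.prems)
qed

lemma finite_bad: "finite {w. bad w}"
  by (rule finite_subset[OF _ finite_Opaths[of "d*m"]]) (auto simp: bad_def)

lemma shift_bad_bij: "bij_betw shift_bad {w. bad w} {w. bad w}"
proof -
  have inj: "inj_on shift_bad {w. bad w}"
  proof (rule inj_onI)
    fix w w' assume "w \<in> {w. bad w}" "w' \<in> {w. bad w}" and eq: "shift_bad w = shift_bad w'"
    then have len: "length w = d*m" "length w' = d*m" by (auto simp: bad_def Opaths_iff)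
    have "first_mixed w = first_mixed w'"
      using eq first_mixed_shift_row[OF len(1)] first_mixed_shift_row[OF len(2)]
      unfolding shift_bad_def by metis
    then show "w = w'" using eq len shift_row_inj unfolding shift_bad_def by metis
  qed
  moreover have "shift_bad ` {w. bad w} \<subseteq> {w. bad w}" using shift_bad_invariants by auto
  ultimately show ?thesis using endo_inj_surj[OF finite_bad] by (simp add: bij_betw_def)
qed

text \<open>A good word has all its rows constant; it is the blowup of a word of length d in
  which every step is repeated m times.\<close>
definition good :: "step list \<Rightarrow> bool" where
  "good w = (w \<in> Opaths (d*m) \<and> \<not> (\<exists>k. mixed_row w k))"

lemma row_const:
  assumes "ones w q e = 0 \<or> ones w q e = m" "r < m"
  shows "bit e (w!(q*m + r)) = bit e (w!(q*m))"
proof -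
  define A where "A = {..<m} \<inter> {r. bit e (w!(q*m + r))}"
  have sub: "A \<subseteq> {..<m}" by (simp add: A_def)
  have "card A = ones w q e" by (simp add: ones_def A_def)
  then consider "card A = 0" | "card A = card {..<m}" using assms(1) by fastforce
  then have "A = {} \<or> A = {..<m}"
  proof cases
    case 1
    then show ?thesis using finite_subset[OF sub] by simp
  next
    case 2
    then show ?thesis using card_subset_eq[OF _ sub] by simp
  qed
  moreover have "r \<in> {..<m}" "0 \<in> {..<m}" using assms(2) m_pos by simp_all
  ultimately have "r \<in> A \<longleftrightarrow> 0 \<in> A" by blast
  then show ?thesis by (simp add: A_def assms(2) m_pos)
qed

lemma good_block_const:
  assumes "good w" "q < d" "r < m"
  shows "w!(q*m + r) = w!(q*m)"
proof (subst step_eq_iff_bits, intro allI)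
  fix e
  define k where "k = 2*q + of_bool e"
  have k: "k div 2 = q" "odd k = e" "k < 2*d" using assms(2) by (cases e; simp add: k_def)+
  have "\<not> mixed_row w k" using assms(1) by (simp add: good_def)
  then have "\<not> (0 < ones w q e \<and> ones w q e < m)" using k by (simp add: mixed_row_def row_ones_def)
  then have "ones w q e = 0 \<or> ones w q e = m" using ones_le[of w q e] by linarith
  then show "bit e (w!(q*m + r)) = bit e (w!(q*m))" using assms(3) by (rule row_const)
qed

definition blowup :: "step list \<Rightarrow> step list" where
  "blowup u = map (\<lambda>p. u!(p div m)) [0..<d*m]"

definition block_heads :: "step list \<Rightarrow> step list" where
  "block_heads w = map (\<lambda>q. w!(q*m)) [0..<d]"

lemma nth_blowup: "q < d \<Longrightarrow> r < m \<Longrightarrow> blowup u ! (q*m + r) = u!q"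
  using block_pos_less by (simp add: blowup_def)

lemma good_blowup:
  assumes "u \<in> Opaths d"
  shows "good (blowup u)"
proof -
  have "(\<Sum>p<d*m. dy (blowup u ! p)) = (\<Sum>q<d. \<Sum>r<m. dy (u!q))"
    unfolding sum_blocks by (intro sum.cong refl) (simp add: nth_blowup)
  also have "\<dots> = int m * (\<Sum>q<d. dy (u!q))" by (simp add: sum_distrib_left)
  also have "\<dots> = 0" using assms by (simp add: Opaths_iff)
  finally have balanced: "blowup u \<in> Opaths (d*m)" by (simp add: Opaths_iff blowup_def)
  have "\<not> mixed_row (blowup u) k" for k
  proof
    assume mixed: "mixed_row (blowup u) k"
    then have "k div 2 < d" unfolding mixed_row_def by (metis less_mult_imp_div_less mult.commute)
    then have "row_ones (blowup u) k = (\<Sum>r<m. of_bool (bit (odd k) (u!(k div 2))))"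
      unfolding row_ones_def ones_def by (intro sum.cong refl) (simp add: nth_blowup)
    then show False using mixed by (cases "bit (odd k) (u!(k div 2))") (auto simp: mixed_row_def)
  qed
  then show ?thesis using balanced by (simp add: good_def)
qed

lemma good_blowup_block_heads:
  assumes "good w"
  shows "blowup (block_heads w) = w"
proof (rule blocks_eqI)
  show "length w = d*m" using assms by (simp add: good_def Opaths_iff)
  fix q r assume "q < d" "r < m"
  then show "blowup (block_heads w) ! (q*m + r) = w ! (q*m + r)"
    by (simp add: nth_blowup block_heads_def good_block_const[OF assms])
qed (simp add: blowup_def)

lemma block_heads_blowup: "u \<in> Opaths d \<Longrightarrow> block_heads (blowup u) = u"
  using m_pos nth_blowup[of _ 0] by (intro nth_equalityI) (auto simp: block_heads_def Opaths_iff)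

lemma good_block_heads_balanced:
  assumes "good w"
  shows "(\<Sum>q<d. dy (w!(q*m))) = 0"
proof -
  have "0 = (\<Sum>p<d*m. dy (w!p))" using assms by (simp add: good_def Opaths_iff)
  also have "\<dots> = (\<Sum>q<d. \<Sum>r<m. dy (w!(q*m)))" unfolding sum_blocks
    by (intro sum.cong refl) (simp add: good_block_const[OF assms])
  also have "\<dots> = int m * (\<Sum>q<d. dy (w!(q*m)))" by (simp add: sum_distrib_left)
  finally show ?thesis using m_pos by simp
qed

lemma card_good: "card {w. good w} = card (Opaths d)"
proof (rule bij_betw_same_card[of block_heads])
  have "block_heads w \<in> Opaths d" if "good w" for w
    using good_block_heads_balanced[OF that] by (simp add: Opaths_iff block_heads_def)
  then show "bij_betw block_heads {w. good w} (Opaths d)"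
    by (intro bij_betw_byWitness[where f'=blowup])
      (auto simp: good_blowup_block_heads block_heads_blowup good_blowup)
qed

lemma good_moment:
  assumes "good w"
  shows "moment w = int m * (int m * (\<Sum>q<d. int q * dy (w!(q*m))))"
proof -
  have len: "length w = d*m" using assms by (simp add: good_def Opaths_iff)
  have "moment w = (\<Sum>q<d. \<Sum>r<m. int (q*m + r) * dy (w!(q*m)))"
    unfolding moment_def len sum_blocks by (intro sum.cong refl) (simp add: good_block_const[OF assms])
  also have "\<dots> = int m * (int m * (\<Sum>q<d. int q * dy (w!(q*m))))
      + (\<Sum>r<m. int r) * (\<Sum>q<d. dy (w!(q*m)))"
    by (simp add: sum_distrib_right sum_distrib_left sum.distrib algebra_simps)
  finally show ?thesis using good_block_heads_balanced[OF assms] by simp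
qed

end

subsection \<open>The character sum\<close>

locale block_character = block_words +
  fixes E :: "int \<Rightarrow> 'a::field_char_0"
  assumes E_add: "E (x + y) = E x * E y"
    and E_period: "E (int m * x) = 1"
    and E_nontrivial: "0 < c \<Longrightarrow> c < int m \<Longrightarrow> E (- c) \<noteq> 1"
begin

lemma E_power: "E x ^ k = E (int k * x)"
  using E_period[of 0] by (induction k) (simp_all add: E_add[symmetric] algebra_simps)

text \<open>Along the orbit of a bad word w under the shift map, E (- moment) is multiplied at
  each step by the nontrivial m-th root of unity E (- c), c the ones in the first mixed row;
  averaging over m steps makes the bad words contribute nothing.\<close>
lemma bad_character_sum: "(\<Sum>w\<in>{w. bad w}. E (- moment w)) = 0"
proof -
  define S where "S = (\<Sum>w\<in>{w. bad w}. E (- moment w))"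
  define ratio where "ratio w = E (- int (row_ones w (first_mixed w)))" for w
  have orbit: "E (- moment ((shift_bad^^k) w)) = ratio w ^ k * E (- moment w)" if bad: "bad w" for w k
  proof -
    obtain t where "moment ((shift_bad^^k) w)
        = moment w + int k * int (row_ones w (first_mixed w)) - int m * t"
      using moment_funpow_shift_bad[OF bad] by blast
    then have "- moment ((shift_bad^^k) w)
        = int k * - int (row_ones w (first_mixed w)) + (- moment w + int m * t)"
      by (simp add: algebra_simps)
    then have "E (- moment ((shift_bad^^k) w))
        = E (int k * - int (row_ones w (first_mixed w))) * (E (- moment w) * E (int m * t))"
      by (simp only: E_add)
    then show ?thesis by (simp add: E_period E_power ratio_def)
  qed
  have S_power: "S = (\<Sum>w\<in>{w. bad w}. ratio w ^ k * E (- moment w))" for k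
  proof -
    have "S = (\<Sum>w\<in>{w. bad w}. E (- moment ((shift_bad^^k) w)))"
      unfolding S_def by (rule sum.reindex_bij_betw[OF bij_betw_funpow[OF shift_bad_bij], symmetric])
    also have "\<dots> = (\<Sum>w\<in>{w. bad w}. ratio w ^ k * E (- moment w))"
      by (rule sum.cong) (auto simp: orbit)
    finally show ?thesis .
  qed
  have geometric: "(\<Sum>k<m. ratio w ^ k) = 0" if "bad w" for w
  proof -
    define c where "c = int (row_ones w (first_mixed w))"
    have "0 < c" "c < int m" using mixed_first_mixed[OF that] by (auto simp: mixed_row_def c_def)
    then have "ratio w \<noteq> 1" using E_nontrivial by (simp add: ratio_def c_def)
    moreover have "ratio w ^ m = 1" unfolding ratio_def E_power using E_period[of "- c"] by (simp add: c_def)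
    ultimately show ?thesis by (simp add: sum_gp_strict)
  qed
  have "of_nat m * S = (\<Sum>k<m. \<Sum>w\<in>{w. bad w}. ratio w ^ k * E (- moment w))"
    using S_power by simp
  also have "\<dots> = (\<Sum>w\<in>{w. bad w}. (\<Sum>k<m. ratio w ^ k) * E (- moment w))"
    by (subst sum.swap) (simp add: sum_distrib_right)
  also have "\<dots> = 0" using geometric by simp
  finally show ?thesis using m_pos by (simp add: S_def)
qed

text \<open>Only the good words contribute, each with value 1.\<close>
theorem character_sum: "(\<Sum>w\<in>Opaths (d*m). E (- moment w)) = of_nat (card (Opaths d))"
proof -
  have split: "Opaths (d*m) = {w. good w} \<union> {w. bad w}" by (auto simp: good_def bad_def)
  have "finite {w. good w}" by (rule finite_subset[OF _ finite_Opaths]) (auto simp: good_def)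
  then have "(\<Sum>w\<in>Opaths (d*m). E (- moment w))
      = (\<Sum>w\<in>{w. good w}. E (- moment w)) + (\<Sum>w\<in>{w. bad w}. E (- moment w))"
    unfolding split by (rule sum.union_disjoint[OF _ finite_bad]) (auto simp: good_def bad_def)
  also have "(\<Sum>w\<in>{w. good w}. E (- moment w)) = (\<Sum>w\<in>{w. good w}. 1)"
  proof (rule sum.cong)
    fix w assume "w \<in> {w. good w}"
    then have "- moment w = int m * - (int m * (\<Sum>q<d. int q * dy (w!(q*m))))"
      using good_moment by simp
    then show "E (- moment w) = 1" by (simp only: E_period)
  qed simp
  finally show ?thesis using bad_character_sum card_good by simp
qed

end

subsection \<open>Fixed points of the rotation\<close>

lemma rot_eq_rotate: "rot w = rotate (length w - 1) w"
proof (cases "w = []")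
  case False
  then have "rotate (length w - 1) w = rotate (length (butlast w)) (butlast w @ [last w])"
    by simp
  also have "\<dots> = last w # butlast w" by (simp only: rotate_append) simp
  finally show ?thesis using False by (simp add: rot_def)
qed (simp add: rot_def)

lemma length_funpow_rot: "length ((rot^^k) w) = length w"
  by (induction k) (simp_all add: rot_eq_rotate)

text \<open>Rotating right by one step is rotating left by length - 1 steps.\<close>
lemma funpow_rot: "(rot^^k) w = rotate (k * (length w - 1)) w"
proof (induction k)
  case (Suc k)
  have "(rot^^Suc k) w = rotate (length w - 1) ((rot^^k) w)"
    by (simp add: rot_eq_rotate length_funpow_rot)
  then show ?case using Suc by (simp add: rotate_rotate add.commute)
qed simp

lemma rotate_eq_self_iff:
  assumes "length w = n"
  shows "rotate s w = w \<longleftrightarrow> (\<forall>i<n. w!((s + i) mod n) = w!i)"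
proof
  assume "rotate s w = w"
  then show "\<forall>i<n. w!((s + i) mod n) = w!i" using assms by (metis nth_rotate)
next
  assume "\<forall>i<n. w!((s + i) mod n) = w!i"
  then show "rotate s w = w" using assms by (intro nth_equalityI) (auto simp: nth_rotate)
qed

lemma shift_invariant_multiple:
  fixes w :: "'a list"
  assumes "0 < n" and inv: "\<forall>i<n. w!((s + i) mod n) = w!i"
  shows "\<forall>i<n. w!((k*s + i) mod n) = w!i"
proof (induction k)
  case (Suc k)
  show ?case
  proof (intro allI impI)
    fix i assume "i < n"
    have "(Suc k * s + i) mod n = (s + (k*s + i) mod n) mod n"
      by (simp add: mod_add_right_eq add.assoc)
    then have "w!((Suc k * s + i) mod n) = w!((k*s + i) mod n)" using inv assms(1) by simp
    then show "w!((Suc k * s + i) mod n) = w!i" using Suc \<open>i < n\<close> by simp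
  qed
qed simp

text \<open>By Bezout, invariance under the shift by s gives invariance under the shift by
  gcd n s, so the word is periodic with that period.\<close>
lemma shift_invariant_gcd:
  fixes w :: "'a list"
  assumes "0 < n" and inv: "\<forall>i<n. w!((s + i) mod n) = w!i" and "i < n"
  shows "w!((i + gcd n s) mod n) = w!i"
proof -
  obtain x y where xy: "n*x = s*y + gcd n s" using bezout_nat[of n s] assms(1) by auto
  have "(y*s + (i + gcd n s) mod n) mod n = (i + n*x) mod n"
    by (simp add: mod_add_right_eq xy algebra_simps)
  also have "\<dots> = i" using assms(3) by simp
  finally show ?thesis using shift_invariant_multiple[OF assms(1) inv, of y] assms(1)
    by (metis mod_less_divisor)
qed

lemma shift_invariant_periodic:
  fixes w :: "'a list"
  assumes "0 < n" and inv: "\<forall>i<n. w!((s + i) mod n) = w!i"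
  shows "\<forall>i<n. w!i = w!(i mod gcd n s)"
proof (intro allI impI)
  have g: "0 < gcd n s" using assms(1) by simp
  fix i show "i < n \<Longrightarrow> w!i = w!(i mod gcd n s)"
  proof (induction i rule: less_induct)
    case (less i)
    show ?case
    proof (cases "i < gcd n s")
      case False
      then have "i - gcd n s < i" "i - gcd n s + gcd n s = i"
        using g by (simp_all add: diff_less del: gcd_pos_nat)
      then have "w!i = w!(i - gcd n s)"
        using shift_invariant_gcd[OF assms, of "i - gcd n s"] less.prems by simp
      also have "\<dots> = w!((i - gcd n s) mod gcd n s)"
        using less.IH \<open>i - gcd n s < i\<close> less.prems by simp
      also have "(i - gcd n s) mod gcd n s = i mod gcd n s" using False by (simp add: le_mod_geq)
      finally show ?thesis .
    qed simp
  qed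
qed

lemma periodic_shift_invariant:
  fixes w :: "'a list"
  assumes per: "\<forall>i<n. w!i = w!(i mod gcd n s)" and "i < n"
  shows "w!((s + i) mod n) = w!i"
proof -
  have "(s + i) mod n < n" using assms(2) by simp
  then have "w!((s + i) mod n) = w!((s + i) mod n mod gcd n s)" using per by blast
  also have "(s + i) mod n mod gcd n s = (s + i) mod gcd n s"
    by (rule mod_mod_cancel) simp
  also have "\<dots> = i mod gcd n s"
    by (metis gcd_dvd2 dvd_imp_mod_0 mod_add_left_eq add_0)
  finally show ?thesis using per assms(2) by simp
qed

lemma rotate_eq_self_iff_periodic:
  fixes w :: "'a list"
  assumes "length w = n" "0 < n"
  shows "rotate s w = w \<longleftrightarrow> (\<forall>i<n. w!i = w!(i mod gcd n s))"
  using rotate_eq_self_iff[OF assms(1)] shift_invariant_periodic[OF assms(2)]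
    periodic_shift_invariant by blast

text \<open>Balanced words of length d m with period d are the m-fold repetitions of balanced
  words of length d.\<close>
lemma card_periodic_Opaths:
  assumes "0 < d" "0 < m"
  shows "card {w \<in> Opaths (d*m). \<forall>i<d*m. w!i = w!(i mod d)} = card (Opaths d)"
proof (rule bij_betw_same_card[of "take d"])
  define rep where "rep u = map (\<lambda>i. u!(i mod d)) [0..<d*m]" for u :: "step list"
  have dm: "d \<le> d*m" using assms(2) by simp
  have sum_periodic: "(\<Sum>p<d*m. f (p mod d)) = int m * (\<Sum>r<d. f r)" for f :: "nat \<Rightarrow> int"
    using sum_blocks[of "\<lambda>p. f (p mod d)" m d] by (simp add: mult.commute)
  have take_balanced: "take d w \<in> Opaths d"
    if "w \<in> Opaths (d*m)" "\<forall>i<d*m. w!i = w!(i mod d)" for w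
  proof -
    have "0 = (\<Sum>p<d*m. dy (w!(p mod d)))" using that by (simp add: Opaths_iff)
    then have "(\<Sum>r<d. dy (w!r)) = 0" using sum_periodic[of "\<lambda>r. dy (w!r)"] assms(2) by simp
    then show ?thesis using that(1) dm by (simp add: Opaths_iff)
  qed
  have rep_periodic: "rep u \<in> Opaths (d*m) \<and> (\<forall>i<d*m. rep u ! i = rep u ! (i mod d))"
    if "u \<in> Opaths d" for u
  proof -
    have "(\<Sum>p<d*m. dy (rep u ! p)) = (\<Sum>p<d*m. dy (u!(p mod d)))" by (simp add: rep_def)
    also have "\<dots> = 0" using sum_periodic[of "\<lambda>r. dy (u!r)"] that by (simp add: Opaths_iff)
    finally have "rep u \<in> Opaths (d*m)" by (simp add: Opaths_iff rep_def)
    moreover have "i mod d < d*m" for i using assms(1) dm by (meson le_trans mod_less_divisor not_le)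
    ultimately show ?thesis by (simp add: rep_def)
  qed
  show "bij_betw (take d) {w \<in> Opaths (d*m). \<forall>i<d*m. w!i = w!(i mod d)} (Opaths d)"
  proof (rule bij_betw_byWitness[where f'=rep])
    show "\<forall>w\<in>{w \<in> Opaths (d*m). \<forall>i<d*m. w!i = w!(i mod d)}. rep (take d w) = w"
      using assms(1) dm by (auto intro!: nth_equalityI simp: rep_def Opaths_iff)
    show "\<forall>u\<in>Opaths d. take d (rep u) = u"
    proof
      fix u assume "u \<in> Opaths d"
      then have len: "length u = d" by (simp add: Opaths_iff)
      have nth_rep: "rep u ! i = u ! i" if "i < d" for i
      proof -
        have "i < d*m" using that dm by linarith
        then show ?thesis using that by (simp add: rep_def)
      qed
      have "length (rep u) = d*m" by (simp add: rep_def)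
      then show "take d (rep u) = u" using len dm nth_rep by (intro nth_equalityI) auto
    qed
  qed (use take_balanced rep_periodic in auto)
qed

theorem card_fixed_points_rot:
  assumes "0 < n"
  shows "card {w \<in> Opaths n. (rot^^j) w = w} = card (Opaths (gcd n j))"
proof -
  define d where "d = gcd n j"
  have "0 < d" "n = d * (n div d)" using assms by (simp_all add: d_def)
  moreover have "0 < n div d" using assms \<open>0 < d\<close> by (simp add: d_def div_greater_zero_iff)
  moreover have "gcd n (j * (n - 1)) = d"
    unfolding d_def using assms by (intro gcd_mult_right_right_cancel coprime_diff_one_right_nat) simp
  then have "{w \<in> Opaths n. (rot^^j) w = w} = {w \<in> Opaths n. \<forall>i<n. w!i = w!(i mod d)}"
    using assms by (auto simp: funpow_rot Opaths_iff rotate_eq_self_iff_periodic)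
  ultimately show ?thesis using card_periodic_Opaths[of d "n div d"] by (metis d_def)
qed

definition root_character :: "nat \<Rightarrow> nat \<Rightarrow> int \<Rightarrow> complex" where
  "root_character n j x = cis (2 * pi * (real j * real_of_int x) / real n)"

lemma root_character_add: "root_character n j (x + y) = root_character n j x * root_character n j y"
  by (simp add: root_character_def cis_mult algebra_simps add_divide_distrib)

lemma root_character_of_nat: "(cis (2 * pi / real n) ^ j) ^ a = root_character n j (int a)"
proof -
  have "(cis (2 * pi / real n) ^ j) ^ a = cis (real (j * a) * (2 * pi / real n))"
    by (simp only: power_mult[symmetric]) (rule DeMoivre)
  then show ?thesis by (simp add: root_character_def algebra_simps)
qed

lemma root_character_eq_1_iff:
  assumes "0 < n"
  shows "root_character n j x = 1 \<longleftrightarrow> int n dvd int j * x"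
proof -
  have "root_character n j x = 1 \<longleftrightarrow> (\<exists>k::int. real j * real_of_int x = of_int k * real n)"
    using assms by (simp add: root_character_def cis_eq_1_iff field_simps)
  also have "\<dots> \<longleftrightarrow> (\<exists>k::int. int j * x = k * int n)"
    by (metis (mono_tags, opaque_lifting) of_int_eq_iff of_int_mult of_int_of_nat_eq)
  finally show ?thesis by (auto simp: dvd_def mult.commute)
qed

text \<open>With d = gcd n j and m = n / d, xi_n^j is a primitive m-th root of unity, so its
  character is one of the kind used in the character sum.\<close>
lemma block_character_root_character:
  assumes "0 < n"
  shows "block_character (n div gcd n j) (root_character n j)"
proof -
  define d m j' where "d = gcd n j" and "m = n div d" and "j' = j div d"
  have n: "n = d*m" and j: "j = d*j'" by (simp_all add: d_def m_def j'_def)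
  have "0 < d" using assms by (simp add: d_def)
  then have "0 < m" using assms n by (cases m) auto
  have coprime: "coprime m j'"
    unfolding m_def j'_def d_def using div_gcd_coprime[of n j] assms by simp
  have dvd_iff: "root_character n j x = 1 \<longleftrightarrow> int m dvd int j' * x" for x
  proof -
    have "int n dvd int j * x \<longleftrightarrow> int d * int m dvd int d * (int j' * x)"
      by (simp add: n j mult.assoc)
    then show ?thesis
      unfolding root_character_eq_1_iff[OF assms] using \<open>0 < d\<close>
      by (simp only: dvd_mult_cancel_left) simp
  qed
  show ?thesis
  proof (unfold_locales, unfold d_def[symmetric] m_def[symmetric])
    show "0 < m" by fact
    show "root_character n j (x + y) = root_character n j x * root_character n j y" for x y
      by (rule root_character_add)
    show "root_character n j (int m * x) = 1" for x
      unfolding dvd_iff by simp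
    show "root_character n j (- c) \<noteq> 1" if "0 < c" "c < int m" for c
    proof
      assume "root_character n j (- c) = 1"
      then have "int m dvd c" unfolding dvd_iff using coprime
        by (simp add: coprime_dvd_mult_right_iff coprime_commute)
      then show False using that by (meson zdvd_imp_le not_le)
    qed
  qed
qed

lemma Opoly_at_root:
  assumes "0 < n"
  shows "poly (Opoly n) (cis (2 * pi / real n) ^ j) = (\<Sum>w\<in>Opaths n. root_character n j (- moment w))"
proof -
  have "poly (Opoly n) (cis (2 * pi / real n) ^ j) = (\<Sum>w\<in>Opaths n. root_character n j (int (area w)))"
    by (simp add: Opoly_def poly_sum poly_monom root_character_of_nat)
  also have "\<dots> = (\<Sum>w\<in>Opaths n. root_character n j (- moment w))"
  proof (rule sum.cong)
    fix w assume "w \<in> Opaths n"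
    define M where "M = Min (relh w ` {0..length w})"
    have "int (area w) = - moment w + int n * - M"
      using area_eq_moment[OF \<open>w \<in> Opaths n\<close>] unfolding M_def[symmetric] by simp
    moreover have "root_character n j (int n * y) = 1" for y
      using root_character_eq_1_iff[OF assms] by simp
    ultimately show "root_character n j (int (area w)) = root_character n j (- moment w)"
      by (simp only: root_character_add mult_1_right)
  qed simp
  finally show ?thesis .
qed

theorem proposition6p1:
  fixes n j :: nat
  assumes "n \<ge> 1" and "j < n"
  shows "poly (Opoly n) ((cis (2 * pi / real n)) ^ j)
           = of_nat (card {P \<in> Opaths n. (rot ^^ j) P = P})"
proof -
  have n: "0 < n" using assms(1) by simp
  interpret block_character "n div gcd n j" "gcd n j" "root_character n j"
    by (rule block_character_root_character[OF n])
  have "n = gcd n j * (n div gcd n j)" by simp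
  then have "poly (Opoly n) (cis (2 * pi / real n) ^ j) = of_nat (card (Opaths (gcd n j)))"
    using Opoly_at_root[OF n] character_sum by simp
  also have "\<dots> = of_nat (card {P \<in> Opaths n. (rot ^^ j) P = P})"
    by (simp add: card_fixed_points_rot[OF n])
  finally show ?thesis .
qed

end
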